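(* Let $\eta$ be a (sufficiently regular, e.g. classical) solution of the uniformly compressing curve-shortening flow described below and let $M(t)=\frac12\int_0^1|\eta(t,s)|^2\,ds$ be its $L^2$-mass. Then $\partial_t M(t)=-1$.
   Context: $\mathbb S^1=\mathbb R/\mathbb Z$, $d\ge2$, $L(\eta)=\int_0^1|\partial_s\eta|\,ds$. The flow: $\eta:[0,t^\ast)\times\mathbb S^1\to\mathbb R^d$ with $\int_0^1\eta(t,s)\,ds=0$ and $|\partial_s\eta(t,s)|=L(t)>0$ for all $(t,s)$, satisfying $\partial_t\eta=L(t)^{-2}\partial_s(\tilde\sigma\partial_s\eta)$, where $\tilde\sigma$ satisfies $\partial_{ss}\tilde\sigma-L^{-2}\tilde\sigma|\partial_{ss}\eta|^2=-L^{-2}\int_0^1\tilde\sigma|\partial_{ss}\eta|^2\,ds$ and $\int_0^1\tilde\sigma(t,s)\,ds=1$ for all $t$. *)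

theory Defs
  imports "HOL-Analysis.Analysis"
begin

text \<open>Curves on S^1 = R/Z are represented as 1-periodic functions on the reals.\<close>

definition curve_length :: "(real \<Rightarrow> 'a::real_normed_vector) \<Rightarrow> real" where
  "curve_length g = integral {0..1} (\<lambda>s. norm (vector_derivative g (at s)))"

definition L2_mass :: "(real \<Rightarrow> 'a::real_normed_vector) \<Rightarrow> real" where
  "L2_mass g = (1/2) * integral {0..1} (\<lambda>s. (norm (g s))\<^sup>2)"

end

theory Submission
  imports Defs
begin

text \<open>
  Differentiating under the integral, \<open>M' = \<integral> \<eta> \<bullet> \<eta>\<^sub>t = L\<^sup>-\<^sup>2 \<integral> \<eta> \<bullet> (\<sigma> \<eta>\<^sub>s)\<^sub>s\<close>. Integrating by
  parts over a period moves the derivative onto \<open>\<eta>\<close>, giving \<open>-L\<^sup>-\<^sup>2 \<integral> \<sigma> \<bar>\<eta>\<^sub>s\<bar>\<^sup>2\<close>; since the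
  speed is constantly \<open>L\<close> this is \<open>-\<integral> \<sigma> = -1\<close>.
\<close>

lemma has_real_derivative_inner:
  fixes f g :: "real \<Rightarrow> 'a::real_inner"
  assumes "(f has_vector_derivative f') (at x within S)"
    and "(g has_vector_derivative g') (at x within S)"
  shows "((\<lambda>x. f x \<bullet> g x) has_real_derivative (f x \<bullet> g' + f' \<bullet> g x)) (at x within S)"
proof -
  have "((\<lambda>x. f x \<bullet> g x) has_derivative (\<lambda>h. f x \<bullet> (h *\<^sub>R g') + (h *\<^sub>R f') \<bullet> g x)) (at x within S)"
    using has_derivative_inner[OF assms[unfolded has_vector_derivative_def]] .
  moreover have "(\<lambda>h. f x \<bullet> (h *\<^sub>R g') + (h *\<^sub>R f') \<bullet> g x) = (*) (f x \<bullet> g' + f' \<bullet> g x)"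
    by (auto simp: algebra_simps fun_eq_iff)
  ultimately show ?thesis
    by (simp add: has_field_derivative_def)
qed

lemma has_vector_derivative_periodic:
  fixes f :: "real \<Rightarrow> 'a::real_normed_vector"
  assumes periodic: "\<And>s. f (s + p) = f s"
    and deriv: "\<And>s. (f has_vector_derivative f' s) (at s)"
  shows "f' (s + p) = f' s"
proof -
  have shift: "((\<lambda>s. s + p) has_vector_derivative 1) (at s)"
    by (auto intro!: derivative_eq_intros simp: has_real_derivative_iff_has_vector_derivative[symmetric])
  have "((f \<circ> (\<lambda>s. s + p)) has_vector_derivative (1 *\<^sub>R f' (s + p))) (at s)"
    by (rule vector_diff_chain_at[OF shift]) (use deriv in simp)
  moreover have "f \<circ> (\<lambda>s. s + p) = f"
    using periodic by (auto simp: fun_eq_iff)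
  ultimately have "(f has_vector_derivative f' (s + p)) (at s)"
    by simp
  then show ?thesis
    using vector_derivative_unique_at deriv by blast
qed

lemma has_integral_inner_by_parts:
  fixes f v :: "real \<Rightarrow> 'a::real_inner"
  assumes "a \<le> b"
    and f: "\<And>s. s \<in> {a..b} \<Longrightarrow> (f has_vector_derivative f' s) (at s within {a..b})"
    and v: "\<And>s. s \<in> {a..b} \<Longrightarrow> (v has_vector_derivative v' s) (at s within {a..b})"
    and boundary: "f b \<bullet> v b = f a \<bullet> v a"
    and I: "((\<lambda>s. f' s \<bullet> v s) has_integral I) {a..b}"
  shows "((\<lambda>s. f s \<bullet> v' s) has_integral - I) {a..b}"
proof -
  have "((\<lambda>s. f s \<bullet> v' s + f' s \<bullet> v s) has_integral (f b \<bullet> v b - f a \<bullet> v a)) {a..b}"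
    by (rule fundamental_theorem_of_calculus[OF \<open>a \<le> b\<close>])
       (simp add: has_real_derivative_iff_has_vector_derivative[symmetric]
         has_real_derivative_inner f v)
  from has_integral_diff[OF this I] show ?thesis
    by (simp add: boundary)
qed

lemma has_integral_inner_tension_divergence:
  fixes \<gamma> \<gamma>' \<gamma>'' :: "real \<Rightarrow> 'a::real_inner" and \<sigma> \<sigma>' :: "real \<Rightarrow> real"
  assumes \<gamma>_periodic: "\<And>s. \<gamma> (s + 1) = \<gamma> s"
    and \<sigma>_periodic: "\<And>s. \<sigma> (s + 1) = \<sigma> s"
    and \<gamma>': "\<And>s. (\<gamma> has_vector_derivative \<gamma>' s) (at s)"
    and \<gamma>'': "\<And>s. (\<gamma>' has_vector_derivative \<gamma>'' s) (at s)"
    and \<sigma>': "\<And>s. (\<sigma> has_real_derivative \<sigma>' s) (at s)"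
    and speed: "\<And>s. norm (\<gamma>' s) = L"
    and \<sigma>_mean: "(\<sigma> has_integral 1) {0..1}"
  shows "((\<lambda>s. \<gamma> s \<bullet> vector_derivative (\<lambda>r. \<sigma> r *\<^sub>R \<gamma>' r) (at s)) has_integral - L\<^sup>2) {0..1}"
proof -
  have tension: "((\<lambda>r. \<sigma> r *\<^sub>R \<gamma>' r) has_vector_derivative \<sigma> s *\<^sub>R \<gamma>'' s + \<sigma>' s *\<^sub>R \<gamma>' s) (at s)"
    for s
    by (rule has_vector_derivative_scaleR[OF \<sigma>' \<gamma>''])
  have "\<gamma>' (0 + 1) = \<gamma>' 0"
    by (rule has_vector_derivative_periodic[OF \<gamma>_periodic \<gamma>'])
  then have boundary: "\<gamma> 1 \<bullet> (\<sigma> 1 *\<^sub>R \<gamma>' 1) = \<gamma> 0 \<bullet> (\<sigma> 0 *\<^sub>R \<gamma>' 0)"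
    using \<gamma>_periodic[of 0] \<sigma>_periodic[of 0] by simp
  have "(\<lambda>s. \<gamma>' s \<bullet> (\<sigma> s *\<^sub>R \<gamma>' s)) = (\<lambda>s. L\<^sup>2 * \<sigma> s)"
    by (simp add: speed fun_eq_iff flip: power2_norm_eq_inner)
  then have "((\<lambda>s. \<gamma>' s \<bullet> (\<sigma> s *\<^sub>R \<gamma>' s)) has_integral L\<^sup>2) {0..1}"
    using has_integral_mult_right[OF \<sigma>_mean, of "L\<^sup>2"] by simp
  from has_integral_inner_by_parts[OF _ _ _ boundary this] show ?thesis
    by (simp add: vector_derivative_at[OF tension] has_vector_derivative_at_within \<gamma>' tension)
qed

lemma has_real_derivative_L2_mass:
  fixes \<gamma> \<gamma>\<^sub>t :: "real \<Rightarrow> real \<Rightarrow> 'a::real_inner"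
  assumes "convex U" "t \<in> U"
    and deriv: "\<And>x s. x \<in> U \<Longrightarrow> ((\<lambda>x. \<gamma> x s) has_vector_derivative \<gamma>\<^sub>t x s) (at x within U)"
    and cont: "\<And>x. x \<in> U \<Longrightarrow> continuous_on {0..1} (\<gamma> x)"
    and cont_deriv: "continuous_on (U \<times> {0..1}) (\<lambda>(x, s). \<gamma> x s \<bullet> \<gamma>\<^sub>t x s)"
  shows "((\<lambda>x. L2_mass (\<gamma> x)) has_real_derivative integral {0..1} (\<lambda>s. \<gamma> t s \<bullet> \<gamma>\<^sub>t t s))
           (at t within U)"
proof -
  have "((\<lambda>x. integral (cbox 0 1) (\<lambda>s. (norm (\<gamma> x s))\<^sup>2)) has_real_derivative
          integral (cbox 0 1) (\<lambda>s. 2 * (\<gamma> t s \<bullet> \<gamma>\<^sub>t t s))) (at t within U)"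
  proof (rule leibniz_rule_field_derivative[OF _ _ _ \<open>t \<in> U\<close> \<open>convex U\<close>])
    fix x s assume "x \<in> U"
    from has_real_derivative_inner[OF deriv[OF this, of s] deriv[OF this, of s]]
    show "((\<lambda>x. (norm (\<gamma> x s))\<^sup>2) has_real_derivative 2 * (\<gamma> x s \<bullet> \<gamma>\<^sub>t x s)) (at x within U)"
      by (simp add: power2_norm_eq_inner inner_commute)
  next
    fix x assume "x \<in> U"
    then have "continuous_on {0..1} (\<lambda>s. (norm (\<gamma> x s))\<^sup>2)"
      using cont by (intro continuous_intros)
    then show "(\<lambda>s. (norm (\<gamma> x s))\<^sup>2) integrable_on cbox 0 1"
      by (simp add: integrable_continuous_real)
  next
    show "continuous_on (U \<times> cbox 0 1) (\<lambda>(x, s). 2 * (\<gamma> x s \<bullet> \<gamma>\<^sub>t x s))"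
      using continuous_on_mult_left[OF cont_deriv, of 2] by (simp add: split_beta)
  qed
  from DERIV_cmult[OF this, of "1 / 2"] show ?thesis
    unfolding L2_mass_def by simp
qed

theorem proposition2p6:
  fixes \<eta> \<eta>\<^sub>t \<eta>\<^sub>s \<eta>\<^sub>s\<^sub>s :: "real \<Rightarrow> real \<Rightarrow> real ^ 'd"
    and \<sigma> \<sigma>\<^sub>s \<sigma>\<^sub>s\<^sub>s :: "real \<Rightarrow> real \<Rightarrow> real"
    and T :: real
  assumes dim: "CARD('d) \<ge> 2"
    and T_pos: "T > 0"
    \<comment> \<open>periodicity in s (curves on S^1 = R/Z)\<close>
    and per_eta: "\<And>t s. t \<in> {0..<T} \<Longrightarrow> \<eta> t (s + 1) = \<eta> t s"
    and per_sigma: "\<And>t s. t \<in> {0..<T} \<Longrightarrow> \<sigma> t (s + 1) = \<sigma> t s"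
    \<comment> \<open>regularity: classical partial derivatives, jointly continuous\<close>
    and d_s: "\<And>t s. t \<in> {0..<T} \<Longrightarrow> ((\<lambda>s. \<eta> t s) has_vector_derivative \<eta>\<^sub>s t s) (at s)"
    and d_ss: "\<And>t s. t \<in> {0..<T} \<Longrightarrow> ((\<lambda>s. \<eta>\<^sub>s t s) has_vector_derivative \<eta>\<^sub>s\<^sub>s t s) (at s)"
    and d_t: "\<And>t s. t \<in> {0..<T} \<Longrightarrow> ((\<lambda>t. \<eta> t s) has_vector_derivative \<eta>\<^sub>t t s) (at t within {0..<T})"
    and cont_eta: "continuous_on ({0..<T} \<times> UNIV) (\<lambda>(t, s). \<eta> t s)"
    and cont_eta_t: "continuous_on ({0..<T} \<times> UNIV) (\<lambda>(t, s). \<eta>\<^sub>t t s)"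
    and cont_eta_s: "continuous_on ({0..<T} \<times> UNIV) (\<lambda>(t, s). \<eta>\<^sub>s t s)"
    and cont_eta_ss: "continuous_on ({0..<T} \<times> UNIV) (\<lambda>(t, s). \<eta>\<^sub>s\<^sub>s t s)"
    and sig_s: "\<And>t s. t \<in> {0..<T} \<Longrightarrow> ((\<lambda>s. \<sigma> t s) has_real_derivative \<sigma>\<^sub>s t s) (at s)"
    and sig_ss: "\<And>t s. t \<in> {0..<T} \<Longrightarrow> ((\<lambda>s. \<sigma>\<^sub>s t s) has_real_derivative \<sigma>\<^sub>s\<^sub>s t s) (at s)"
    and cont_sig_ss: "\<And>t. t \<in> {0..<T} \<Longrightarrow> continuous_on UNIV (\<sigma>\<^sub>s\<^sub>s t)"
    \<comment> \<open>zero mean, constant speed equal to the length\<close>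
    and mean0: "\<And>t. t \<in> {0..<T} \<Longrightarrow> integral {0..1} (\<lambda>s. \<eta> t s) = 0"
    and L_pos: "\<And>t. t \<in> {0..<T} \<Longrightarrow> curve_length (\<eta> t) > 0"
    and speed: "\<And>t s. t \<in> {0..<T} \<Longrightarrow> norm (\<eta>\<^sub>s t s) = curve_length (\<eta> t)"
    \<comment> \<open>the flow equation  \<partial>_t \<eta> = L^{-2} \<partial>_s (\<sigma> \<partial>_s \<eta>)\<close>
    and flow: "\<And>t s. t \<in> {0..<T} \<Longrightarrow>
        \<eta>\<^sub>t t s = (1 / (curve_length (\<eta> t))\<^sup>2) *\<^sub>R
                   vector_derivative (\<lambda>r. \<sigma> t r *\<^sub>R \<eta>\<^sub>s t r) (at s)"
    \<comment> \<open>the equation for the tension \<sigma>\<close>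
    and sigma_eq: "\<And>t s. t \<in> {0..<T} \<Longrightarrow>
        \<sigma>\<^sub>s\<^sub>s t s - (1 / (curve_length (\<eta> t))\<^sup>2) * \<sigma> t s * (norm (\<eta>\<^sub>s\<^sub>s t s))\<^sup>2
          = - (1 / (curve_length (\<eta> t))\<^sup>2) *
              integral {0..1} (\<lambda>r. \<sigma> t r * (norm (\<eta>\<^sub>s\<^sub>s t r))\<^sup>2)"
    and sigma_int: "\<And>t. t \<in> {0..<T} \<Longrightarrow> integral {0..1} (\<lambda>s. \<sigma> t s) = 1"
  shows "\<forall>t \<in> {0..<T}.
           ((\<lambda>t. L2_mass (\<eta> t)) has_real_derivative (-1)) (at t within {0..<T})"
proof
  fix t assume t: "t \<in> {0..<T}"
  define L where "L = curve_length (\<eta> t)"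
  have "L > 0"
    using L_pos[OF t] by (simp add: L_def)
  have "continuous_on {0..1} (\<sigma> t)"
    using sig_s[OF t] by (meson DERIV_isCont continuous_at_imp_continuous_on)
  then have \<sigma>_mean: "(\<sigma> t has_integral 1) {0..1}"
    using sigma_int[OF t] by (metis integrable_continuous_real has_integral_integral)
  have "((\<lambda>s. \<eta> t s \<bullet> vector_derivative (\<lambda>r. \<sigma> t r *\<^sub>R \<eta>\<^sub>s t r) (at s)) has_integral - L\<^sup>2) {0..1}"
    using has_integral_inner_tension_divergence[OF per_eta[OF t] per_sigma[OF t]
        d_s[OF t] d_ss[OF t] sig_s[OF t] speed[OF t] \<sigma>_mean]
    by (simp add: L_def)
  from has_integral_mult_right[OF this, of "1 / L\<^sup>2"]
  have "((\<lambda>s. \<eta> t s \<bullet> \<eta>\<^sub>t t s) has_integral -1) {0..1}"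
    using \<open>L > 0\<close> flow[OF t, folded L_def] by simp
  then have mass_rate: "integral {0..1} (\<lambda>s. \<eta> t s \<bullet> \<eta>\<^sub>t t s) = -1"
    by (rule integral_unique)
  have "((\<lambda>x. L2_mass (\<eta> x)) has_real_derivative integral {0..1} (\<lambda>s. \<eta> t s \<bullet> \<eta>\<^sub>t t s))
      (at t within {0..<T})"
  proof (rule has_real_derivative_L2_mass[OF _ t d_t])
    show "convex {0..<T}"
      by (rule convex_real_interval)
  next
    fix x assume "x \<in> {0..<T}"
    then show "continuous_on {0..1} (\<eta> x)"
      using d_s by (meson continuous_at_imp_continuous_on has_vector_derivative_continuous)
  next
    have "continuous_on ({0..<T} \<times> {0..1}) (\<lambda>p. (\<lambda>(x, s). \<eta> x s) p \<bullet> (\<lambda>(x, s). \<eta>\<^sub>t x s) p)"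
      by (intro continuous_intros continuous_on_subset[OF cont_eta] continuous_on_subset[OF cont_eta_t]) auto
    then show "continuous_on ({0..<T} \<times> {0..1}) (\<lambda>(x, s). \<eta> x s \<bullet> \<eta>\<^sub>t x s)"
      by (simp add: split_beta)
  qed
  then show "((\<lambda>t. L2_mass (\<eta> t)) has_real_derivative -1) (at t within {0..<T})"
    by (simp only: mass_rate)
qed

end
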